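(* Let $n_0>3$ be a constant and consider on $u>0,q>0$ the system $$\frac{du}{d\xi}=u(3-u-n_0q),\qquad \frac{dq}{d\xi}=q(-1+u+q).$$ Define $$\Psi=(uq)^{\frac{2}{n_0-1}}\Big(\frac{n_0-5}{(n_0-1)^2}+\frac{2q}{n_0-1}-\frac{q^2}{2}-\frac{qu}{n_0+1}\Big).$$ Then along solutions $$\frac{d\Psi}{d\xi}=(n_0-5)(n_0-1)^{-3}(uq)^{\frac{2}{n_0-1}}\big((n_0-1)q-2\big)^2.$$ Consequently, for $n_0\neq5$, $\Psi$ is monotone along orbits and the only possible $\omega$-limit set (resp. $\alpha$-limit set) contained in the open quadrant $u,q>0$ is the fixed point $(u,q)=\big(\frac{n_0-3}{n_0-1},\frac{2}{n_0-1}\big)$.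
   Context: This is the equation system for the exact polytrope $\rho\propto\eta^{n_0}$, written in the homology invariants $u=4\pi r^3\rho/m$ and $q=m/(r\eta)$ with independent variable $\xi=\ln r$, where $\eta=\int_0^p dp'/\rho(p')$ and $dm/dr=4\pi r^2\rho$, $dp/dr=-m\rho/r^2$. *)

theory Defs
  imports "HOL-Analysis.Analysis"
begin

definition Psi :: "real \<Rightarrow> real \<Rightarrow> real \<Rightarrow> real" where
  "Psi n0 u q = (u * q) powr (2 / (n0 - 1)) *
     ((n0 - 5) / (n0 - 1)^2 + 2 * q / (n0 - 1) - q^2 / 2 - q * u / (n0 + 1))"

definition omega_limit :: "real set \<Rightarrow> (real \<Rightarrow> real) \<Rightarrow> (real \<Rightarrow> real) \<Rightarrow> (real \<times> real) set" where
  "omega_limit I u q = {p. \<exists>t :: nat \<Rightarrow> real. (\<forall>k. t k \<in> I) \<and> filterlim t at_top sequentially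
       \<and> ((\<lambda>k. (u (t k), q (t k))) \<longlonglongrightarrow> p)}"

definition alpha_limit :: "real set \<Rightarrow> (real \<Rightarrow> real) \<Rightarrow> (real \<Rightarrow> real) \<Rightarrow> (real \<times> real) set" where
  "alpha_limit I u q = {p. \<exists>t :: nat \<Rightarrow> real. (\<forall>k. t k \<in> I) \<and> filterlim t at_bot sequentially
       \<and> ((\<lambda>k. (u (t k), q (t k))) \<longlonglongrightarrow> p)}"

end

theory Submission
  imports Defs
begin

text \<open>
  Along solutions, the derivative of Psi is (n0 - 5) times a nonnegative quantity that vanishes
  exactly on the line q = 2 / (n0 - 1), so for n0 \<noteq> 5 the function (n0 - 5) Psi is a Lyapunov
  function. The limit sets are then located by a LaSalle-type argument. A trajectory returns
  arbitrarily close to each of its omega-limit points p and, its speed being bounded near p,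
  stays close to p for a fixed time h. If the derivative of Psi did not vanish at p, every such
  visit would raise (n0 - 5) Psi by a fixed amount, which is incompatible with its convergence;
  hence all omega-limit points in the open quadrant lie on q = 2 / (n0 - 1). The points reached
  a time h after the visits accumulate at omega-limit points again, so the change of q over the
  visits tends to 0, whereas it is close to h times dq/d\<xi> at p. Hence dq/d\<xi> vanishes at p,
  i.e. u + q = 1, which singles out the fixed point. Alpha-limit sets are the omega-limit sets
  of the time-reversed system.
\<close>

section \<open>Lyapunov functions and omega-limit sets\<close>

lemma mono_on_if_deriv_nonneg:
  fixes f f' :: "real \<Rightarrow> real"
  assumes I: "is_interval I"
    and f': "\<And>t. t \<in> I \<Longrightarrow> (f has_real_derivative f' t) (at t)"
    and nonneg: "\<And>t. t \<in> I \<Longrightarrow> 0 \<le> f' t"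
  shows "mono_on I f"
proof (rule mono_onI)
  fix r s assume rs: "r \<in> I" "s \<in> I" "r \<le> s"
  have "y \<in> I" if "r \<le> y" "y \<le> s" for y
    using mem_is_interval_1_I[OF I rs(1,2)] that by blast
  then show "f r \<le> f s"
    using f' nonneg by (intro DERIV_nonneg_imp_nondecreasing[OF \<open>r \<le> s\<close>]) blast
qed

lemma mono_on_cmultD:
  fixes c :: real and f :: "real \<Rightarrow> real"
  assumes mono: "mono_on I (\<lambda>t. c * f t)" and "c \<noteq> 0"
  shows "mono_on I f \<or> antimono_on I f"
proof (cases "c > 0")
  case True
  then have "mono_on I f"
    using mono by (auto simp: monotone_on_def mult_le_cancel_left_pos)
  then show ?thesis ..
next
  case False
  with \<open>c \<noteq> 0\<close> have "antimono_on I f"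
    using mono by (auto simp: monotone_on_def mult_le_cancel_left)
  then show ?thesis ..
qed

lemma interval_contains_tail:
  fixes I :: "real set" and t :: "nat \<Rightarrow> real"
  assumes I: "is_interval I" and t: "\<And>k. t k \<in> I" "filterlim t at_top sequentially"
    and a: "a \<in> I"
  shows "{a..} \<subseteq> I"
proof
  fix s assume "s \<in> {a..}"
  obtain k where "s \<le> t k"
    using t(2) by (auto simp: filterlim_at_top eventually_sequentially)
  with \<open>s \<in> {a..}\<close> show "s \<in> I"
    using mem_is_interval_1_I[OF I a t(1)] by auto
qed

lemma first_time_reaching_level:
  fixes g :: "real \<Rightarrow> real"
  assumes g: "continuous_on {a..b} g" and s: "s \<in> {a..b}" "e \<le> g s"
  obtains t1 where "t1 \<in> {a..s}" "e \<le> g t1" "\<And>r. a \<le> r \<Longrightarrow> r < t1 \<Longrightarrow> g r < e"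
proof -
  define B where "B = {a..b} \<inter> g -` {e..}"
  have "closed B"
    unfolding B_def by (rule continuous_closed_preimage[OF g closed_atLeastAtMost closed_atLeast])
  moreover have "s \<in> B" using s by (simp add: B_def)
  moreover have "bdd_below B" by (auto simp: B_def intro: bdd_belowI)
  ultimately have "Inf B \<in> B" "Inf B \<le> s"
    using closed_contains_Inf cInf_lower by blast+
  moreover have "g r < e" if "a \<le> r" "r < Inf B" for r
  proof (rule ccontr)
    assume "\<not> g r < e"
    with that \<open>Inf B \<le> s\<close> s(1) have "r \<in> B" by (auto simp: B_def)
    then show False using cInf_lower[OF _ \<open>bdd_below B\<close>] that(2) by fastforce
  qed
  ultimately show ?thesis using that by (auto simp: B_def)
qed

lemma trajectory_displacement_le:
  fixes x :: "real \<Rightarrow> 'a::euclidean_space"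
  assumes "a \<le> b"
    and x': "\<And>t. t \<in> {a..b} \<Longrightarrow> (x has_vector_derivative F (x t)) (at t)"
    and bound: "\<And>t. t \<in> {a<..<b} \<Longrightarrow> norm (F (x t)) \<le> M"
  shows "dist (x b) (x a) \<le> (b - a) * M"
proof (cases "a = b")
  case False
  with \<open>a \<le> b\<close> have "a < b" by simp
  have "continuous_on {a..b} x"
    using x' by (intro continuous_at_imp_continuous_on ballI has_vector_derivative_continuous) blast
  moreover have "(x has_derivative (\<lambda>r. r *\<^sub>R F (x t))) (at t)" if "a < t" "t < b" for t
    using x'[of t] that by (simp add: has_vector_derivative_def)
  ultimately obtain z where z: "z \<in> {a<..<b}" "norm (x b - x a) \<le> norm ((b - a) *\<^sub>R F (x z))"
    using mvt_general[OF \<open>a < b\<close>, where f = x and f' = "\<lambda>t r. r *\<^sub>R F (x t)"] by blast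
  have "norm ((b - a) *\<^sub>R F (x z)) \<le> (b - a) * M"
    using bound[OF z(1)] \<open>a < b\<close> by (simp add: mult_left_mono)
  with z(2) show ?thesis by (simp add: dist_norm)
qed simp

lemma trajectory_stays_near:
  fixes x :: "real \<Rightarrow> 'a::euclidean_space"
  assumes I: "is_interval I"
    and x': "\<And>t. t \<in> I \<Longrightarrow> (x has_vector_derivative F (x t)) (at t)"
    and F: "continuous_on (cball p e) F" and e: "e > 0"
  obtains \<delta> h where "\<delta> > 0" "h > 0"
    "\<And>t s. t \<in> I \<Longrightarrow> t + h \<in> I \<Longrightarrow> dist (x t) p < \<delta> \<Longrightarrow> s \<in> {t..t + h} \<Longrightarrow> dist (x s) p < e"
proof -
  have "bounded (F ` cball p e)"
    by (intro compact_imp_bounded compact_continuous_image F compact_cball)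
  then obtain M where M: "M > 0" "\<And>y. y \<in> cball p e \<Longrightarrow> norm (F y) \<le> M"
    unfolding bounded_pos by (meson imageI)
  define \<delta> h where "\<delta> = e / 2" and "h = \<delta> / M"
  have "dist (x s) p < e"
    if t: "t \<in> I" "t + h \<in> I" "dist (x t) p < \<delta>" and s: "s \<in> {t..t + h}" for t s
  proof (rule ccontr)
    assume "\<not> dist (x s) p < e"
    have sub: "{t..t + h} \<subseteq> I"
      using mem_is_interval_1_I[OF I t(1,2)] by auto
    have "continuous_on {t..t + h} x"
      using sub x' by (intro continuous_at_imp_continuous_on ballI has_vector_derivative_continuous) blast
    then have "continuous_on {t..t + h} (\<lambda>r. dist (x r) p)"
      by (intro continuous_on_dist continuous_on_const)
    then obtain t1 where t1: "t1 \<in> {t..s}" "e \<le> dist (x t1) p"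
      and before_t1: "\<And>r. t \<le> r \<Longrightarrow> r < t1 \<Longrightarrow> dist (x r) p < e"
      using first_time_reaching_level s \<open>\<not> dist (x s) p < e\<close> by (metis not_less)
    have "dist (x t1) (x t) \<le> (t1 - t) * M"
    proof (rule trajectory_displacement_le)
      show "(x has_vector_derivative F (x r)) (at r)" if "r \<in> {t..t1}" for r
      proof -
        have "r \<in> {t..t + h}" using that t1(1) s by auto
        then show ?thesis using sub x' by blast
      qed
      show "norm (F (x r)) \<le> M" if "r \<in> {t<..<t1}" for r
        using that before_t1[of r] M(2)[of "x r"] by (simp add: dist_commute)
    qed (use t1 in simp)
    also have "\<dots> \<le> h * M" using t1 s M by (intro mult_right_mono) auto
    finally have "dist (x t1) (x t) \<le> \<delta>" using M by (simp add: h_def)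
    then show False
      using t(3) t1(2) dist_triangle[of "x t1" p "x t"] by (simp add: \<delta>_def)
  qed
  moreover have "\<delta> > 0" "h > 0" using e M by (auto simp: \<delta>_def h_def)
  ultimately show ?thesis using that by blast
qed

lemma trajectory_increment_near:
  fixes x :: "real \<Rightarrow> 'a::euclidean_space"
  assumes I: "is_interval I"
    and x': "\<And>t. t \<in> I \<Longrightarrow> (x has_vector_derivative F (x t)) (at t)"
    and \<psi>': "\<And>t. t \<in> I \<Longrightarrow> ((\<lambda>t. \<psi> (x t)) has_real_derivative \<Psi> (x t)) (at t)"
    and F: "continuous_on (cball p e) F" and \<Psi>: "continuous_on (cball p e) \<Psi>"
    and e: "e > 0" and \<epsilon>: "\<epsilon> > 0"
  obtains \<delta> h where "\<delta> > 0" "h > 0"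
    "\<And>t. t \<in> I \<Longrightarrow> t + h \<in> I \<Longrightarrow> dist (x t) p < \<delta> \<Longrightarrow>
      dist (x (t + h)) p < e \<and> \<bar>\<psi> (x (t + h)) - \<psi> (x t) - h * \<Psi> p\<bar> < h * \<epsilon>"
proof -
  obtain d where d: "d > 0" "\<And>y. y \<in> cball p e \<Longrightarrow> dist y p < d \<Longrightarrow> \<bar>\<Psi> y - \<Psi> p\<bar> < \<epsilon>"
    using \<Psi> e \<epsilon> unfolding continuous_on_iff by (force simp: dist_real_def)
  define e' where "e' = min e d"
  have "cball p e' \<subseteq> cball p e" by (rule subset_cball) (simp add: e'_def)
  moreover have "e' > 0" using e d by (simp add: e'_def)
  ultimately obtain \<delta> h where \<delta>h: "\<delta> > 0" "h > 0"
    and stay: "\<And>t s. t \<in> I \<Longrightarrow> t + h \<in> I \<Longrightarrow> dist (x t) p < \<delta> \<Longrightarrow> s \<in> {t..t + h} \<Longrightarrow> dist (x s) p < e'"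
    using trajectory_stays_near[OF I x' continuous_on_subset[OF F]] by metis
  have "dist (x (t + h)) p < e \<and> \<bar>\<psi> (x (t + h)) - \<psi> (x t) - h * \<Psi> p\<bar> < h * \<epsilon>"
    if t: "t \<in> I" "t + h \<in> I" "dist (x t) p < \<delta>" for t
  proof
    show "dist (x (t + h)) p < e"
      using stay[OF t, of "t + h"] \<delta>h by (simp add: e'_def)
    have sub: "{t..t + h} \<subseteq> I"
      using mem_is_interval_1_I[OF I t(1,2)] by auto
    obtain z where z: "t < z" "z < t + h" "\<psi> (x (t + h)) - \<psi> (x t) = h * \<Psi> (x z)"
    proof (rule MVT2[of t "t + h" "\<lambda>t. \<psi> (x t)" "\<lambda>t. \<Psi> (x t)", THEN exE])
      show "\<And>s. t \<le> s \<Longrightarrow> s \<le> t + h \<Longrightarrow> ((\<lambda>t. \<psi> (x t)) has_real_derivative \<Psi> (x s)) (at s)"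
        using \<psi>' sub by auto
    qed (use \<delta>h in auto)
    have "dist (x z) p < e'" using stay[OF t, of z] z by simp
    then have "\<bar>\<Psi> (x z) - \<Psi> p\<bar> < \<epsilon>" using d(2)[of "x z"] by (simp add: e'_def dist_commute)
    then show "\<bar>\<psi> (x (t + h)) - \<psi> (x t) - h * \<Psi> p\<bar> < h * \<epsilon>"
      using \<delta>h z(3) by (simp add: right_diff_distrib[symmetric] abs_mult)
  qed
  with \<delta>h that show ?thesis by blast
qed

lemma trajectory_increment_along_sequence:
  fixes x :: "real \<Rightarrow> 'a::euclidean_space"
  assumes I: "is_interval I"
    and x': "\<And>t. t \<in> I \<Longrightarrow> (x has_vector_derivative F (x t)) (at t)"
    and \<psi>': "\<And>t. t \<in> I \<Longrightarrow> ((\<lambda>t. \<psi> (x t)) has_real_derivative \<Psi> (x t)) (at t)"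
    and S: "open S" "continuous_on S F" "continuous_on S \<Psi>" "p \<in> S"
    and t: "\<And>k. t k \<in> I" "filterlim t at_top sequentially" "(\<lambda>k. x (t k)) \<longlonglongrightarrow> p"
    and \<epsilon>: "\<epsilon> > 0"
  obtains h e where "h > 0" "cball p e \<subseteq> S" "\<And>k. t k + h \<in> I"
    "eventually (\<lambda>k. x (t k + h) \<in> cball p e \<and>
       \<bar>\<psi> (x (t k + h)) - \<psi> (x (t k)) - h * \<Psi> p\<bar> < h * \<epsilon>) sequentially"
proof -
  obtain e where e: "e > 0" "cball p e \<subseteq> S"
    using S(1,4) open_contains_cball by blast
  obtain \<delta> h where \<delta>h: "\<delta> > 0" "h > 0" and incr: "\<And>t. t \<in> I \<Longrightarrow> t + h \<in> I \<Longrightarrow> dist (x t) p < \<delta> \<Longrightarrow>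
      dist (x (t + h)) p < e \<and> \<bar>\<psi> (x (t + h)) - \<psi> (x t) - h * \<Psi> p\<bar> < h * \<epsilon>"
    using trajectory_increment_near[OF I x' \<psi>' continuous_on_subset[OF S(2) e(2)]
        continuous_on_subset[OF S(3) e(2)] e(1) \<epsilon>] by metis
  have th: "t k + h \<in> I" for k
    using interval_contains_tail[OF I t(1,2) t(1)[of k]] \<delta>h by auto
  have "eventually (\<lambda>k. dist (x (t k)) p < \<delta>) sequentially"
    using t(3) \<delta>h(1) by (rule tendstoD)
  then have "eventually (\<lambda>k. x (t k + h) \<in> cball p e \<and>
      \<bar>\<psi> (x (t k + h)) - \<psi> (x (t k)) - h * \<Psi> p\<bar> < h * \<epsilon>) sequentially"
    by (rule eventually_mono) (use incr[OF t(1) th] in \<open>auto simp: dist_commute intro: less_imp_le\<close>)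
  with \<delta>h(2) e(2) th that show ?thesis by blast
qed

definition omega_limit_set :: "real set \<Rightarrow> (real \<Rightarrow> 'a::topological_space) \<Rightarrow> 'a set" where
  "omega_limit_set I x = {p. \<exists>t. (\<forall>k. t k \<in> I) \<and> filterlim t at_top sequentially \<and> (\<lambda>k. x (t k)) \<longlonglongrightarrow> p}"

lemma omega_limit_eq_omega_limit_set: "omega_limit I u q = omega_limit_set I (\<lambda>t. (u t, q t))"
  by (simp add: omega_limit_def omega_limit_set_def)

lemma alpha_limit_eq_omega_limit_set:
  "alpha_limit I u q = omega_limit_set (uminus ` I) (\<lambda>t. (u (- t), q (- t)))"
proof (intro set_eqI iffI)
  fix p assume "p \<in> alpha_limit I u q"
  then obtain t where "\<forall>k. t k \<in> I" "filterlim t at_bot sequentially" "(\<lambda>k. (u (t k), q (t k))) \<longlonglongrightarrow> p"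
    by (auto simp: alpha_limit_def)
  then show "p \<in> omega_limit_set (uminus ` I) (\<lambda>t. (u (- t), q (- t)))"
    unfolding omega_limit_set_def
    by (intro CollectI exI[of _ "\<lambda>k. - t k"]) (auto simp: filterlim_uminus_at_top)
next
  fix p assume "p \<in> omega_limit_set (uminus ` I) (\<lambda>t. (u (- t), q (- t)))"
  then obtain t where t: "\<forall>k. t k \<in> uminus ` I" "filterlim t at_top sequentially"
    "(\<lambda>k. (u (- t k), q (- t k))) \<longlonglongrightarrow> p"
    by (auto simp: omega_limit_set_def)
  moreover have "- t k \<in> I" for k
    using t(1) by (metis image_iff minus_minus)
  ultimately show "p \<in> alpha_limit I u q"
    unfolding alpha_limit_def
    by (intro CollectI exI[of _ "\<lambda>k. - t k"]) (auto simp: filterlim_uminus_at_bot image_iff)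
qed

lemma Lyapunov_rate_zero_at_omega_limit:
  fixes x :: "real \<Rightarrow> 'a::euclidean_space"
  assumes I: "is_interval I"
    and x': "\<And>t. t \<in> I \<Longrightarrow> (x has_vector_derivative F (x t)) (at t)"
    and V': "\<And>t. t \<in> I \<Longrightarrow> ((\<lambda>t. V (x t)) has_real_derivative G (x t)) (at t)"
    and mono: "mono_on I (\<lambda>t. V (x t))"
    and S: "open S" "continuous_on S F" "continuous_on S G" "continuous_on S V"
    and p: "p \<in> omega_limit_set I x" "p \<in> S"
  shows "G p = 0"
proof (rule ccontr)
  assume "G p \<noteq> 0"
  obtain t where t: "\<And>k. t k \<in> I" "filterlim t at_top sequentially" "(\<lambda>k. x (t k)) \<longlonglongrightarrow> p"
    using p(1) by (auto simp: omega_limit_set_def)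
  have "\<bar>G p\<bar> / 2 > 0" using \<open>G p \<noteq> 0\<close> by simp
  then obtain h e where h: "h > 0" and "cball p e \<subseteq> S" and th: "\<And>k. t k + h \<in> I"
    and ev: "eventually (\<lambda>k. x (t k + h) \<in> cball p e \<and>
      \<bar>V (x (t k + h)) - V (x (t k)) - h * G p\<bar> < h * (\<bar>G p\<bar> / 2)) sequentially"
    using trajectory_increment_along_sequence[OF I x' V' S(1-3) p(2) t] by blast
  let ?\<Delta> = "\<lambda>k. V (x (t k + h)) - V (x (t k))"
  have "isCont V p"
    using S(1,4) p(2) continuous_on_eq_continuous_at by blast
  then have Vlim: "(\<lambda>k. V (x (t k))) \<longlonglongrightarrow> V p"
    using t(3) by (rule isCont_tendsto_compose)
  then have "eventually (\<lambda>k. V p - h * (\<bar>G p\<bar> / 2) < V (x (t k))) sequentially"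
    using h \<open>G p \<noteq> 0\<close> by (intro order_tendstoD) auto
  then obtain k where k: "\<bar>?\<Delta> k - h * G p\<bar> < h * (\<bar>G p\<bar> / 2)" "V p - h * (\<bar>G p\<bar> / 2) < V (x (t k))"
    using eventually_happens'[OF sequentially_bot eventually_conj[OF ev]] by auto
  have "V (x (t k + h)) \<le> V p"
  proof (rule LIMSEQ_le_const[OF Vlim])
    obtain N where "\<forall>j\<ge>N. t k + h \<le> t j"
      using t(2) by (auto simp: filterlim_at_top eventually_sequentially)
    then show "\<exists>N. \<forall>j\<ge>N. V (x (t k + h)) \<le> V (x (t j))"
      using mono_onD[OF mono th t(1)] by blast
  qed
  moreover have "V (x (t k)) \<le> V (x (t k + h))"
    using mono_onD[OF mono t(1) th] h by simp
  ultimately have "\<bar>?\<Delta> k\<bar> < h * (\<bar>G p\<bar> / 2)"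
    using k(2) by (simp add: abs_less_iff)
  moreover have "\<bar>h * G p\<bar> \<le> \<bar>?\<Delta> k\<bar> + \<bar>?\<Delta> k - h * G p\<bar>" by arith
  ultimately show False using k(1) h by (simp add: abs_mult)
qed

lemma delayed_omega_limit_point:
  fixes x :: "real \<Rightarrow> 'a::first_countable_topology"
  assumes I: "is_interval I" and t: "\<And>k. t k \<in> I" "filterlim t at_top sequentially"
    and "h \<ge> 0" and K: "compact K" "eventually (\<lambda>k. x (t k + h) \<in> K) sequentially"
  obtains l r where "l \<in> K" "l \<in> omega_limit_set I x" "strict_mono r"
    "(\<lambda>j. x (t (r j) + h)) \<longlonglongrightarrow> l"
proof -
  obtain N where "\<And>k. k \<ge> N \<Longrightarrow> x (t k + h) \<in> K"
    using K(2) by (auto simp: eventually_sequentially)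
  then have "\<forall>k. x (t (k + N) + h) \<in> K" by simp
  then obtain l r' where l: "l \<in> K" and r': "strict_mono r'"
    and "((\<lambda>k. x (t (k + N) + h)) \<circ> r') \<longlonglongrightarrow> l"
    by (rule seq_compactE[OF compact_imp_seq_compact[OF K(1)]])
  moreover define r where "r = (\<lambda>j. r' j + N)"
  ultimately have r: "strict_mono r" and lim: "(\<lambda>j. x (t (r j) + h)) \<longlonglongrightarrow> l"
    by (simp_all add: strict_mono_def o_def)
  have "filterlim (\<lambda>j. t (r j) + h) at_top sequentially"
    using filterlim_tendsto_add_at_top[OF tendsto_const filterlim_compose[OF t(2) filterlim_subseq[OF r]]]
    by (simp add: add.commute)
  moreover have "t (r j) + h \<in> I" for j
    using interval_contains_tail[OF I t t(1)[of "r j"]] \<open>h \<ge> 0\<close> by auto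
  ultimately have "l \<in> omega_limit_set I x"
    using lim unfolding omega_limit_set_def by (intro CollectI exI[of _ "\<lambda>j. t (r j) + h"]) simp
  with l r lim that show ?thesis by blast
qed

lemma rate_zero_at_omega_limit_if_constant:
  fixes x :: "real \<Rightarrow> 'a::euclidean_space"
  assumes I: "is_interval I"
    and x': "\<And>t. t \<in> I \<Longrightarrow> (x has_vector_derivative F (x t)) (at t)"
    and \<phi>': "\<And>t. t \<in> I \<Longrightarrow> ((\<lambda>t. \<phi> (x t)) has_real_derivative \<Phi> (x t)) (at t)"
    and S: "open S" "continuous_on S F" "continuous_on S \<phi>" "continuous_on S \<Phi>"
    and const: "\<And>l. l \<in> omega_limit_set I x \<Longrightarrow> l \<in> S \<Longrightarrow> \<phi> l = \<phi> p"
    and p: "p \<in> omega_limit_set I x" "p \<in> S"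
  shows "\<Phi> p = 0"
proof (rule ccontr)
  assume "\<Phi> p \<noteq> 0"
  obtain t where t: "\<And>k. t k \<in> I" "filterlim t at_top sequentially" "(\<lambda>k. x (t k)) \<longlonglongrightarrow> p"
    using p(1) by (auto simp: omega_limit_set_def)
  have "\<bar>\<Phi> p\<bar> / 2 > 0" using \<open>\<Phi> p \<noteq> 0\<close> by simp
  then obtain h e where h: "h > 0" and e: "cball p e \<subseteq> S" and "\<And>k. t k + h \<in> I"
    and ev: "eventually (\<lambda>k. x (t k + h) \<in> cball p e \<and>
      \<bar>\<phi> (x (t k + h)) - \<phi> (x (t k)) - h * \<Phi> p\<bar> < h * (\<bar>\<Phi> p\<bar> / 2)) sequentially"
    using trajectory_increment_along_sequence[OF I x' \<phi>' S(1,2,4) p(2) t] by blast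
  let ?jump = "\<lambda>k. \<phi> (x (t k + h)) - \<phi> (x (t k))"
  have "eventually (\<lambda>k. x (t k + h) \<in> cball p e) sequentially"
    using ev by (rule eventually_mono) simp
  then obtain l r where l: "l \<in> cball p e" "l \<in> omega_limit_set I x" and r: "strict_mono r"
    and lim_l: "(\<lambda>j. x (t (r j) + h)) \<longlonglongrightarrow> l"
    using delayed_omega_limit_point[OF I t(1,2) less_imp_le[OF h] compact_cball] by blast
  have lim_p: "(\<lambda>j. x (t (r j))) \<longlonglongrightarrow> p"
    using LIMSEQ_subseq_LIMSEQ[OF t(3) r] by (simp add: o_def)
  have "\<phi> l = \<phi> p" using const l e by blast
  moreover have "isCont \<phi> l" "isCont \<phi> p"
    using S(1,3) p(2) l e continuous_on_eq_continuous_at by blast+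
  ultimately have "(\<lambda>j. ?jump (r j)) \<longlonglongrightarrow> 0"
    using tendsto_diff[OF isCont_tendsto_compose[OF _ lim_l] isCont_tendsto_compose[OF _ lim_p]]
    by fastforce
  moreover have "h * (\<bar>\<Phi> p\<bar> / 2) > 0" using h \<open>\<Phi> p \<noteq> 0\<close> by simp
  ultimately have "eventually (\<lambda>j. dist (?jump (r j)) 0 < h * (\<bar>\<Phi> p\<bar> / 2)) sequentially"
    by (rule tendstoD)
  then obtain j where "\<bar>?jump (r j)\<bar> < h * (\<bar>\<Phi> p\<bar> / 2)"
    "\<bar>?jump (r j) - h * \<Phi> p\<bar> < h * (\<bar>\<Phi> p\<bar> / 2)"
    using eventually_happens'[OF sequentially_bot eventually_conj[OF _ eventually_subseq[OF r ev]]]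
    by (auto simp: dist_real_def)
  moreover have "\<bar>h * \<Phi> p\<bar> \<le> \<bar>?jump (r j)\<bar> + \<bar>?jump (r j) - h * \<Phi> p\<bar>" by arith
  ultimately show False using h by (simp add: abs_mult)
qed

lemma LaSalle_omega_limit_point:
  fixes x :: "real \<Rightarrow> 'a::euclidean_space"
  assumes I: "is_interval I"
    and x': "\<And>t. t \<in> I \<Longrightarrow> (x has_vector_derivative F (x t)) (at t)"
    and V': "\<And>t. t \<in> I \<Longrightarrow> ((\<lambda>t. V (x t)) has_real_derivative G (x t)) (at t)"
    and mono: "mono_on I (\<lambda>t. V (x t))"
    and \<phi>': "\<And>t. t \<in> I \<Longrightarrow> ((\<lambda>t. \<phi> (x t)) has_real_derivative \<Phi> (x t)) (at t)"
    and S: "open S" "continuous_on S F" "continuous_on S G" "continuous_on S V"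
      "continuous_on S \<phi>" "continuous_on S \<Phi>"
    and level: "\<And>y. y \<in> S \<Longrightarrow> G y = 0 \<Longrightarrow> \<phi> y = c"
    and p: "p \<in> omega_limit_set I x" "p \<in> S"
  shows "\<phi> p = c" "\<Phi> p = 0"
proof -
  have on_level: "\<phi> l = c" if "l \<in> omega_limit_set I x" "l \<in> S" for l
    using Lyapunov_rate_zero_at_omega_limit[OF I x' V' mono S(1-4) that] level that(2) by blast
  then show "\<phi> p = c" using p by blast
  show "\<Phi> p = 0"
    using rate_zero_at_omega_limit_if_constant[OF I x' \<phi>' S(1,2,5,6) _ p] on_level p by simp
qed

section \<open>The polytropic system\<close>

definition Psi_rate :: "real \<Rightarrow> real \<Rightarrow> real \<Rightarrow> real" where
  "Psi_rate n0 u q = (n0 - 5) * (n0 - 1) powr (-3) * (u * q) powr (2 / (n0 - 1)) * ((n0 - 1) * q - 2)^2"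

lemma Psi_rate_identity:
  fixes n0 u q :: real
  assumes "n0 > 1"
  shows "2 / (n0 - 1) * (2 - (n0 - 1) * q)
           * ((n0 - 5) / (n0 - 1)^2 + 2 * q / (n0 - 1) - q^2 / 2 - q * u / (n0 + 1))
         - q / (n0 + 1) * (u * (3 - u - n0 * q))
         + (2 / (n0 - 1) - q - u / (n0 + 1)) * (q * (-1 + u + q))
         = (n0 - 5) / (n0 - 1)^3 * ((n0 - 1) * q - 2)^2"
proof -
  \<comment> \<open>with the reciprocals replaced by i and j, the identity follows from \<open>inv\<close> by ring reasoning\<close>
  define i j where "i = 1 / (n0 - 1)" and "j = 1 / (n0 + 1)"
  have inv: "(n0 - 1) * i = 1" "(n0 + 1) * j = 1"
    using assms by (auto simp: i_def j_def)
  have "2 / (n0 - 1) = 2 * i" "(n0 - 5) / (n0 - 1)^2 = (n0 - 5) * i^2" "2 * q / (n0 - 1) = 2 * q * i"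
    "q * u / (n0 + 1) = q * u * j" "q / (n0 + 1) = q * j" "u / (n0 + 1) = u * j"
    "(n0 - 5) / (n0 - 1)^3 = (n0 - 5) * i^3"
    by (simp_all add: i_def j_def field_simps power2_eq_square power3_eq_cube)
  with inv show ?thesis by algebra
qed

lemma has_real_derivative_Psi:
  fixes n0 \<sigma> t :: real and u q :: "real \<Rightarrow> real"
  assumes n0: "n0 > 1" and pos: "u t > 0" "q t > 0"
    and du: "(u has_real_derivative \<sigma> * (u t * (3 - u t - n0 * q t))) (at t)"
    and dq: "(q has_real_derivative \<sigma> * (q t * (-1 + u t + q t))) (at t)"
  shows "((\<lambda>t. Psi n0 (u t) (q t)) has_real_derivative \<sigma> * Psi_rate n0 (u t) (q t)) (at t)"
proof -
  define a j where "a = 2 / (n0 - 1)" and "j = 1 / (n0 + 1)"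
  define B where "B = (\<lambda>u q. (n0 - 5) / (n0 - 1)^2 + a * q - q^2 / 2 - j * q * u)"
  define U Q where "U = u t * (3 - u t - n0 * q t)" and "Q = q t * (-1 + u t + q t)"
  have w: "u t * q t > 0" using pos by simp
  have dw: "((\<lambda>t. u t * q t) has_real_derivative \<sigma> * (u t * q t) * (2 - (n0 - 1) * q t)) (at t)"
    by (rule DERIV_cong[OF DERIV_mult[OF du dq]]) (simp add: algebra_simps)
  have dwa: "((\<lambda>t. (u t * q t) powr a) has_real_derivative
      \<sigma> * (u t * q t) powr a * (a * (2 - (n0 - 1) * q t))) (at t)"
    by (rule DERIV_cong[OF DERIV_powr[OF dw w DERIV_const]]) (use w in simp)
  have "(u has_real_derivative \<sigma> * U) (at t)" "(q has_real_derivative \<sigma> * Q) (at t)"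
    using du dq by (simp_all add: U_def Q_def)
  then have dB: "((\<lambda>t. B (u t) (q t)) has_real_derivative
      \<sigma> * (- j * q t * U + (a - q t - j * u t) * Q)) (at t)"
    unfolding B_def by (auto intro!: derivative_eq_intros simp: algebra_simps power2_eq_square)
  have "((\<lambda>t. (u t * q t) powr a * B (u t) (q t)) has_real_derivative
      \<sigma> * (u t * q t) powr a * (a * (2 - (n0 - 1) * q t) * B (u t) (q t)
        - j * q t * U + (a - q t - j * u t) * Q)) (at t)"
    by (rule DERIV_cong[OF DERIV_mult[OF dwa dB]]) (simp add: algebra_simps)
  moreover have "Psi n0 = (\<lambda>u q. (u * q) powr a * B u q)"
    by (simp add: fun_eq_iff Psi_def B_def a_def j_def)
  moreover have "(n0 - 1) powr (-3) = 1 / (n0 - 1)^3"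
    using n0 by (simp add: powr_minus powr_numeral divide_simps)
  ultimately show ?thesis
    using Psi_rate_identity[OF n0, of "q t" "u t"]
    by (simp add: Psi_rate_def a_def B_def j_def U_def Q_def mult_ac)
qed

lemma Psi_rate_sign:
  assumes "n0 > 1"
  shows "0 \<le> (n0 - 5) * Psi_rate n0 u q"
proof -
  have "(n0 - 5) * Psi_rate n0 u q
      = (n0 - 5)^2 * (n0 - 1) powr (-3) * (u * q) powr (2 / (n0 - 1)) * ((n0 - 1) * q - 2)^2"
    by (simp add: Psi_rate_def power2_eq_square)
  then show ?thesis by simp
qed

lemma Psi_rate_eq_0_iff:
  assumes "n0 > 1" "u * q > 0"
  shows "Psi_rate n0 u q = 0 \<longleftrightarrow> n0 = 5 \<or> q = 2 / (n0 - 1)"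
  using assms by (auto simp: Psi_rate_def field_simps)

lemma polytrope_limit_point:
  fixes n0 \<sigma> :: real and J :: "real set" and u q :: "real \<Rightarrow> real"
  assumes n0: "n0 > 1" "n0 \<noteq> 5" and \<sigma>: "\<sigma> \<noteq> 0" and J: "is_interval J"
    and pos: "\<And>t. t \<in> J \<Longrightarrow> u t > 0 \<and> q t > 0"
    and du: "\<And>t. t \<in> J \<Longrightarrow> (u has_real_derivative \<sigma> * (u t * (3 - u t - n0 * q t))) (at t)"
    and dq: "\<And>t. t \<in> J \<Longrightarrow> (q has_real_derivative \<sigma> * (q t * (-1 + u t + q t))) (at t)"
    and p: "p \<in> omega_limit_set J (\<lambda>t. (u t, q t))" "fst p > 0" "snd p > 0"
  shows "p = ((n0 - 3) / (n0 - 1), 2 / (n0 - 1))"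
proof -
  define S where "S = {y :: real \<times> real. fst y > 0 \<and> snd y > 0}"
  define Q where "Q = (\<lambda>y :: real \<times> real. \<sigma> * (snd y * (-1 + fst y + snd y)))"
  define F where "F = (\<lambda>y :: real \<times> real. (\<sigma> * (fst y * (3 - fst y - n0 * snd y)), Q y))"
  \<comment> \<open>the factor \<open>\<sigma> * (n0 - 5)\<close> makes V nondecreasing in either time direction\<close>
  define V where "V = (\<lambda>y :: real \<times> real. \<sigma> * (n0 - 5) * Psi n0 (fst y) (snd y))"
  define G where "G = (\<lambda>y :: real \<times> real. \<sigma>^2 * ((n0 - 5) * Psi_rate n0 (fst y) (snd y)))"
  have "open S"
    unfolding S_def by (intro open_Collect_conj open_Collect_less continuous_intros)
  have cont: "continuous_on S F" "continuous_on S Q"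
    unfolding F_def Q_def by (intro continuous_intros)+
  have "continuous_on S V"
    unfolding S_def V_def Psi_def using n0 by (intro continuous_intros) auto
  have "continuous_on S G"
    unfolding S_def G_def Psi_rate_def using n0 by (intro continuous_intros) auto
  have x': "((\<lambda>t. (u t, q t)) has_vector_derivative F (u t, q t)) (at t)" if "t \<in> J" for t
    using du[OF that] dq[OF that] unfolding F_def Q_def
    by (auto intro!: has_vector_derivative_Pair simp flip: has_real_derivative_iff_has_vector_derivative)
  have V': "((\<lambda>t. V (u t, q t)) has_real_derivative G (u t, q t)) (at t)" if "t \<in> J" for t
    using DERIV_cmult[OF has_real_derivative_Psi[OF _ _ _ du[OF that] dq[OF that]], of "\<sigma> * (n0 - 5)"]
      pos[OF that] n0
    unfolding V_def G_def by (simp add: power2_eq_square mult_ac)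
  have q': "((\<lambda>t. snd (u t, q t)) has_real_derivative Q (u t, q t)) (at t)" if "t \<in> J" for t
    using dq[OF that] by (simp add: Q_def)
  have mono: "mono_on J (\<lambda>t. V (u t, q t))"
  proof (rule mono_on_if_deriv_nonneg[OF J V'])
    show "0 \<le> G (u t, q t)" for t
      using n0 by (simp add: G_def Psi_rate_sign)
  qed
  have level: "snd y = 2 / (n0 - 1)" if "y \<in> S" "G y = 0" for y
    using Psi_rate_eq_0_iff[of n0 "fst y" "snd y"] \<sigma> n0 that by (simp add: G_def S_def)
  have "p \<in> S" using p by (simp add: S_def)
  then have "snd p = 2 / (n0 - 1)" "Q p = 0"
    using LaSalle_omega_limit_point[where \<phi> = snd, OF J x' V' mono q' \<open>open S\<close> cont(1)
        \<open>continuous_on S G\<close> \<open>continuous_on S V\<close> continuous_on_snd[OF continuous_on_id] cont(2)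
        level p(1)] by blast+
  then have "fst p = 1 - snd p"
    using \<sigma> p(3) by (simp add: Q_def)
  also have "\<dots> = (n0 - 3) / (n0 - 1)"
    using \<open>snd p = 2 / (n0 - 1)\<close> n0 by (simp add: field_simps)
  finally show ?thesis
    using \<open>snd p = 2 / (n0 - 1)\<close> by (simp add: prod_eq_iff)
qed

theorem mainTheorem10:
  fixes n0 :: real and I :: "real set" and u q :: "real \<Rightarrow> real"
  assumes n0: "n0 > 3"
    and I: "is_interval I" "open I" "I \<noteq> {}"
    and pos: "\<And>\<xi>. \<xi> \<in> I \<Longrightarrow> u \<xi> > 0 \<and> q \<xi> > 0"
    and du: "\<And>\<xi>. \<xi> \<in> I \<Longrightarrow> (u has_real_derivative u \<xi> * (3 - u \<xi> - n0 * q \<xi>)) (at \<xi>)"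
    and dq: "\<And>\<xi>. \<xi> \<in> I \<Longrightarrow> (q has_real_derivative q \<xi> * (-1 + u \<xi> + q \<xi>)) (at \<xi>)"
  shows "(\<forall>\<xi>\<in>I. ((\<lambda>x. Psi n0 (u x) (q x)) has_real_derivative
            (n0 - 5) * (n0 - 1) powr (-3) * (u \<xi> * q \<xi>) powr (2 / (n0 - 1))
              * ((n0 - 1) * q \<xi> - 2)^2) (at \<xi>))
       \<and> (n0 \<noteq> 5 \<longrightarrow>
            (mono_on I (\<lambda>x. Psi n0 (u x) (q x)) \<or> antimono_on I (\<lambda>x. Psi n0 (u x) (q x)))
          \<and> (omega_limit I u q \<noteq> {} \<and> omega_limit I u q \<subseteq> {p. fst p > 0 \<and> snd p > 0}
               \<longrightarrow> omega_limit I u q = {((n0 - 3) / (n0 - 1), 2 / (n0 - 1))})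
          \<and> (alpha_limit I u q \<noteq> {} \<and> alpha_limit I u q \<subseteq> {p. fst p > 0 \<and> snd p > 0}
               \<longrightarrow> alpha_limit I u q = {((n0 - 3) / (n0 - 1), 2 / (n0 - 1))}))"
proof -
  have Psi': "((\<lambda>x. Psi n0 (u x) (q x)) has_real_derivative Psi_rate n0 (u \<xi>) (q \<xi>)) (at \<xi>)"
    if "\<xi> \<in> I" for \<xi>
    using has_real_derivative_Psi[of n0 u \<xi> q 1] n0 pos[OF that] du[OF that] dq[OF that] by simp
  have "mono_on I (\<lambda>\<xi>. (n0 - 5) * Psi n0 (u \<xi>) (q \<xi>))"
  proof (rule mono_on_if_deriv_nonneg[OF I(1) DERIV_cmult[OF Psi']])
    show "0 \<le> (n0 - 5) * Psi_rate n0 (u \<xi>) (q \<xi>)" for \<xi>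
      using n0 by (simp add: Psi_rate_sign)
  qed
  moreover have "p = ((n0 - 3) / (n0 - 1), 2 / (n0 - 1))"
    if "n0 \<noteq> 5" "p \<in> omega_limit I u q" "fst p > 0" "snd p > 0" for p
    using polytrope_limit_point[of n0 1 I u q p] n0 I(1) pos du dq that
    by (simp add: omega_limit_eq_omega_limit_set)
  moreover have "p = ((n0 - 3) / (n0 - 1), 2 / (n0 - 1))"
    if "n0 \<noteq> 5" "p \<in> alpha_limit I u q" "fst p > 0" "snd p > 0" for p
  proof (rule polytrope_limit_point[of n0 "-1" "uminus ` I" "\<lambda>t. u (- t)" "\<lambda>t. q (- t)"])
    show "p \<in> omega_limit_set (uminus ` I) (\<lambda>t. (u (- t), q (- t)))"
      using that(2) by (simp add: alpha_limit_eq_omega_limit_set)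
    show "((\<lambda>t. u (- t)) has_real_derivative -1 * (u (- t) * (3 - u (- t) - n0 * q (- t)))) (at t)"
      if "t \<in> uminus ` I" for t
      using du[of "- t"] that by (auto simp: DERIV_mirror)
    show "((\<lambda>t. q (- t)) has_real_derivative -1 * (q (- t) * (-1 + u (- t) + q (- t)))) (at t)"
      if "t \<in> uminus ` I" for t
      using dq[of "- t"] that by (auto simp: DERIV_mirror)
  qed (use n0 I(1) pos that in auto)
  ultimately show ?thesis
    using Psi' mono_on_cmultD[of I "n0 - 5"] unfolding Psi_rate_def by auto
qed

end
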